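(* Let $G$ be a finite group with neutral element $e$, and let $A$ be a finitely-generated associative algebra over a commutative ring $R$ with unit, graded by $G$, i.e. $A=\bigoplus_{g\in G}A_g$ as $R$-modules with $A_gA_{g'}\subseteq A_{gg'}$ for all $g,g'\in G$. If the neutral component $A_e$ (which is a subalgebra of $A$) has a Shirshov base of height $h$, then $A$ has a Shirshov base of height strictly less than $(h+1)|G|$.
   Context: All algebras are associative (not necessarily unital) algebras over a commutative ring $R$ with unit. A finite subset $S$ of an algebra $B$ is called a Shirshov base of $B$ of height $h$ if $B$ is linearly spanned (over $R$) by the elements of the form $a_1^{k_1}a_2^{k_2}\cdots a_n^{k_n}$ with $n\le h$, $k_1,\dots,k_n$ positive integers, and $a_1,\dots,a_n\in S$. *)

theory Defs
  imports Main "HOL.Modules"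
begin

text \<open>Product of a nonempty list in a (possibly non-unital) associative ring;
  the value at the empty list is irrelevant (never used).\<close>
fun lprod :: "'a::ring list \<Rightarrow> 'a" where
  "lprod [] = 0"
| "lprod [x] = x"
| "lprod (x # y # xs) = x * lprod (y # xs)"

text \<open>Positive powers a^k (k \<ge> 1) without needing a unit.\<close>
definition npow :: "'a::ring \<Rightarrow> nat \<Rightarrow> 'a" where
  "npow a k = lprod (replicate k a)"

definition algebra_over :: "('r::comm_ring_1 \<Rightarrow> 'a::ring \<Rightarrow> 'a) \<Rightarrow> bool" where
  "algebra_over sc \<longleftrightarrow> module sc \<and>
     (\<forall>r x y. sc r (x * y) = sc r x * y \<and> sc r (x * y) = x * sc r y)"

definition fin_gen_algebra :: "('r::comm_ring_1 \<Rightarrow> 'a::ring \<Rightarrow> 'a) \<Rightarrow> bool" where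
  "fin_gen_algebra sc \<longleftrightarrow>
     (\<exists>X. finite X \<and> module.span sc {lprod xs | xs. xs \<noteq> [] \<and> set xs \<subseteq> X} = UNIV)"

text \<open>G-grading: A = direct sum of the R-submodules Ag g, with Ag g * Ag g' \<subseteq> Ag (g+g').
  The group G is written additively (not necessarily commutative).\<close>
definition graded_by :: "('r::comm_ring_1 \<Rightarrow> 'a::ring \<Rightarrow> 'a) \<Rightarrow> ('g::{group_add,finite} \<Rightarrow> 'a set) \<Rightarrow> bool" where
  "graded_by sc Ag \<longleftrightarrow>
     (\<forall>g. module.subspace sc (Ag g)) \<and>
     (\<forall>a. \<exists>!c. (\<forall>g. c g \<in> Ag g) \<and> a = (\<Sum>g\<in>UNIV. c g)) \<and>
     (\<forall>g g' x y. x \<in> Ag g \<longrightarrow> y \<in> Ag g' \<longrightarrow> x * y \<in> Ag (g + g'))"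

definition shirshov_words :: "'a::ring set \<Rightarrow> nat \<Rightarrow> 'a set" where
  "shirshov_words S h =
     {lprod (map (\<lambda>(a, k). npow a k) ps) | ps.
        ps \<noteq> [] \<and> length ps \<le> h \<and> (\<forall>(a, k) \<in> set ps. a \<in> S \<and> 0 < k)}"

definition shirshov_base :: "('r::comm_ring_1 \<Rightarrow> 'a::ring \<Rightarrow> 'a) \<Rightarrow> 'a set \<Rightarrow> 'a set \<Rightarrow> nat \<Rightarrow> bool" where
  "shirshov_base sc B S h \<longleftrightarrow>
     finite S \<and> S \<subseteq> B \<and> B = module.span sc (shirshov_words S h)"

end

theory Submission
  imports Defs
begin

(* Splitting each algebra generator into its homogeneous
   components gives a finite set Y of homogeneous generators, and A is spanned by the
   products y_1 ... y_n of elements of Y.  Such a product is handled by the degrees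
   D_i = deg y_1 + ... + deg y_i of its prefixes: if j is the last index with D_j = 0,
   the word splits as q x r where q lies in A_0 (height h), x is a single letter and the
   suffix r takes strictly fewer distinct prefix degrees.  Induction on the length shows
   that a word with c distinct prefix degrees has height at most c (h + 1) - 1 over
   S \<union> Y, and c \<le> |G|, which is the bound of the theorem. *)

lemma lprod_append:
  "xs \<noteq> [] \<Longrightarrow> ys \<noteq> [] \<Longrightarrow> lprod (xs @ ys) = lprod xs * lprod ys"
proof (induction xs rule: lprod.induct)
  case 1 then show ?case by simp
next
  case (2 x) then show ?case by (cases ys) auto
next
  case (3 x y xs) then show ?case by (simp add: mult.assoc)
qed

lemma lprod_Cons: "ys \<noteq> [] \<Longrightarrow> lprod (y # ys) = y * lprod ys"
  by (cases ys) auto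

lemma shirshov_words_mult:
  assumes "p \<in> shirshov_words T a" "q \<in> shirshov_words T b"
  shows "p * q \<in> shirshov_words T (a + b)"
proof -
  obtain ps where ps: "p = lprod (map (\<lambda>(a, k). npow a k) ps)" "ps \<noteq> []" "length ps \<le> a"
    "\<forall>(a, k) \<in> set ps. a \<in> T \<and> 0 < k"
    using assms(1) unfolding shirshov_words_def by blast
  obtain qs where qs: "q = lprod (map (\<lambda>(a, k). npow a k) qs)" "qs \<noteq> []" "length qs \<le> b"
    "\<forall>(a, k) \<in> set qs. a \<in> T \<and> 0 < k"
    using assms(2) unfolding shirshov_words_def by blast
  have "p * q = lprod (map (\<lambda>(a, k). npow a k) (ps @ qs))"
    using ps qs by (simp add: lprod_append)
  then show ?thesis unfolding shirshov_words_def using ps qs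
    by (intro CollectI exI[of _ "ps @ qs"]) auto
qed

lemma shirshov_words_mono:
  "a \<le> b \<Longrightarrow> T \<subseteq> T' \<Longrightarrow> shirshov_words T a \<subseteq> shirshov_words T' b"
  unfolding shirshov_words_def by fastforce

lemma shirshov_words_letter: "y \<in> T \<Longrightarrow> y \<in> shirshov_words T 1"
  unfolding shirshov_words_def
  by (intro CollectI exI[of _ "[(y, 1)]"]) (auto simp: npow_def)

definition monomials :: "'a::ring set \<Rightarrow> 'a set" where
  "monomials X = {lprod xs | xs. xs \<noteq> [] \<and> set xs \<subseteq> X}"

lemma monomials_Cons:
  assumes "y \<in> Y" "m \<in> monomials Y"
  shows "y * m \<in> monomials Y"
proof -
  obtain xs where "m = lprod xs" "xs \<noteq> []" "set xs \<subseteq> Y"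
    using assms(2) unfolding monomials_def by blast
  then show ?thesis using assms(1)
    unfolding monomials_def by (intro CollectI exI[of _ "y # xs"]) (auto simp: lprod_Cons)
qed

text \<open>A word has height at most k over T if its product is spanned by Shirshov words of
  height k over T; the empty word counts as having every height.\<close>

definition height_le :: "('r::comm_ring_1 \<Rightarrow> 'a::ring \<Rightarrow> 'a) \<Rightarrow> 'a set \<Rightarrow> nat \<Rightarrow> 'a list \<Rightarrow> bool" where
  "height_le sc T k xs \<longleftrightarrow> xs = [] \<or> lprod xs \<in> module.span sc (shirshov_words T k)"

context
  fixes sc :: "'r::comm_ring_1 \<Rightarrow> 'a::ring \<Rightarrow> 'a"
  assumes alg: "algebra_over sc"
begin

interpretation m: module sc using alg unfolding algebra_over_def by blast

text \<open>Multiplication is R-bilinear, so products of spans are spanned by products.\<close>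

lemma span_mult:
  assumes u: "u \<in> m.span A" and v: "v \<in> m.span B"
    and AB: "\<And>a b. a \<in> A \<Longrightarrow> b \<in> B \<Longrightarrow> a * b \<in> m.span C"
  shows "u * v \<in> m.span C"
proof -
  have scale_left: "sc r (x * y) = sc r x * y" and scale_right: "sc r (x * y) = x * sc r y"
    for r x y using alg unfolding algebra_over_def by blast+
  have left_factor: "a * v \<in> m.span C" if "a \<in> A" for a
    using v
  proof (induction v rule: m.span_induct_alt)
    case base then show ?case by (simp add: m.span_zero)
  next
    case (step c x y)
    have "a * (sc c x + y) = sc c (a * x) + a * y"
      by (simp add: distrib_left scale_right)
    then show ?case using step AB[OF that] by (simp add: m.span_add m.span_scale)
  qed
  show ?thesis using u
  proof (induction u rule: m.span_induct_alt)
    case base then show ?case by (simp add: m.span_zero)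
  next
    case (step c x y)
    have "(sc c x + y) * v = sc c (x * v) + y * v"
      by (simp add: distrib_right scale_left)
    then show ?case using step left_factor by (simp add: m.span_add m.span_scale)
  qed
qed

lemma monomials_in_span:
  assumes "X \<subseteq> m.span Y"
  shows "monomials X \<subseteq> m.span (monomials Y)"
proof -
  have "lprod xs \<in> m.span (monomials Y)" if "xs \<noteq> []" "set xs \<subseteq> X" for xs
    using that
  proof (induction xs)
    case Nil then show ?case by simp
  next
    case (Cons x xs)
    have x: "x \<in> m.span Y" using Cons.prems assms by auto
    show ?case
    proof (cases "xs = []")
      case True
      have "Y \<subseteq> monomials Y"
      proof
        fix y assume "y \<in> Y"
        then show "y \<in> monomials Y"
          unfolding monomials_def by (intro CollectI exI[of _ "[y]"]) simp
      qed
      then show ?thesis using m.span_mono x True by auto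
    next
      case False
      have "lprod xs \<in> m.span (monomials Y)" using Cons False by simp
      with x have "x * lprod xs \<in> m.span (monomials Y)"
        by (rule span_mult) (intro m.span_base monomials_Cons)
      then show ?thesis using False by (simp add: lprod_Cons)
    qed
  qed
  then show ?thesis unfolding monomials_def by blast
qed

lemma height_le_mono: "height_le sc T a xs \<Longrightarrow> a \<le> b \<Longrightarrow> height_le sc T b xs"
  unfolding height_le_def using m.span_mono[OF shirshov_words_mono[of a b T T]] by auto

lemma height_le_append:
  assumes "height_le sc T a xs" "height_le sc T b ys"
  shows "height_le sc T (a + b) (xs @ ys)"
proof (cases "xs = [] \<or> ys = []")
  case True
  then show ?thesis
  proof
    assume "xs = []"
    then show ?thesis using height_le_mono[OF assms(2), of "a + b"] by simp
  next
    assume "ys = []"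
    then show ?thesis using height_le_mono[OF assms(1), of "a + b"] by simp
  qed
next
  case False
  have "lprod xs \<in> m.span (shirshov_words T a)" "lprod ys \<in> m.span (shirshov_words T b)"
    using assms False unfolding height_le_def by auto
  then have "lprod xs * lprod ys \<in> m.span (shirshov_words T (a + b))"
    by (rule span_mult) (auto intro: m.span_base shirshov_words_mult)
  then show ?thesis using False by (simp add: height_le_def lprod_append)
qed

lemma height_le_letter:
  assumes "x \<in> T" shows "height_le sc T 1 [x]"
  unfolding height_le_def using m.span_base[OF shirshov_words_letter[OF assms]] by simp

end

definition multiplicative :: "('g::plus \<Rightarrow> 'a::times set) \<Rightarrow> bool" where
  "multiplicative Ag \<longleftrightarrow> (\<forall>g g' x y. x \<in> Ag g \<longrightarrow> y \<in> Ag g' \<longrightarrow> x * y \<in> Ag (g + g'))"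

lemma lprod_homogeneous:
  assumes "multiplicative Ag"
  shows "ys \<noteq> [] \<Longrightarrow> \<forall>y\<in>set ys. y \<in> Ag (d y) \<Longrightarrow> lprod ys \<in> Ag (sum_list (map d ys))"
proof (induction ys rule: lprod.induct)
  case (3 x y xs) then show ?case using assms by (simp add: multiplicative_def)
qed simp_all

definition prefix_degrees :: "('a \<Rightarrow> 'g::monoid_add) \<Rightarrow> 'a list \<Rightarrow> 'g set" where
  "prefix_degrees d ys = (\<lambda>i. sum_list (map d (take i ys))) ` {..length ys}"

lemma prefix_degrees_finite: "finite (prefix_degrees d ys)"
  unfolding prefix_degrees_def by simp

lemma zero_in_prefix_degrees: "0 \<in> prefix_degrees d ys"
  unfolding prefix_degrees_def by (auto intro: image_eqI[of _ _ 0])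

lemma card_prefix_degrees_pos: "0 < card (prefix_degrees d ys)"
  using prefix_degrees_finite zero_in_prefix_degrees card_gt_0_iff by blast

lemma last_zero_prefix:
  fixes d :: "'a \<Rightarrow> 'g::monoid_add"
  obtains j where "j \<le> length ys" "sum_list (map d (take j ys)) = 0"
    "\<And>i. j < i \<Longrightarrow> i \<le> length ys \<Longrightarrow> sum_list (map d (take i ys)) \<noteq> 0"
proof -
  define J where "J = {j. j \<le> length ys \<and> sum_list (map d (take j ys)) = 0}"
  have "finite J" "0 \<in> J" unfolding J_def by auto
  then have max: "Max J \<in> J" "\<And>i. i \<in> J \<Longrightarrow> i \<le> Max J" by (auto intro: Max_ge Max_in)
  show ?thesis
  proof (rule that[of "Max J"])
    show "Max J \<le> length ys" "sum_list (map d (take (Max J) ys)) = 0"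
      using max(1) unfolding J_def by auto
    fix i assume "Max J < i" "i \<le> length ys"
    then have "i \<notin> J" using max(2) by (meson not_le)
    then show "sum_list (map d (take i ys)) \<noteq> 0" using \<open>i \<le> length ys\<close> unfolding J_def by blast
  qed
qed

text \<open>Behind the last zero prefix at position j, the suffix after position j sees strictly
  fewer prefix degrees: its own ones, shifted by a fixed degree, avoid 0.\<close>

lemma card_prefix_degrees_suffix:
  fixes d :: "'a \<Rightarrow> 'g::group_add"
  assumes j: "j < length ys"
    and nonzero: "\<And>i. j < i \<Longrightarrow> i \<le> length ys \<Longrightarrow> sum_list (map d (take i ys)) \<noteq> 0"
  shows "card (prefix_degrees d (drop (Suc j) ys)) < card (prefix_degrees d ys)"
proof -
  define a where "a = sum_list (map d (take (Suc j) ys))"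
  have shift: "(\<lambda>z. a + z) ` prefix_degrees d (drop (Suc j) ys) \<subseteq> prefix_degrees d ys - {0}"
  proof
    fix w assume "w \<in> (\<lambda>z. a + z) ` prefix_degrees d (drop (Suc j) ys)"
    then obtain i where i: "i \<le> length ys - Suc j"
      "w = a + sum_list (map d (take i (drop (Suc j) ys)))"
      unfolding prefix_degrees_def by auto
    have "take (Suc j + i) ys = take (Suc j) ys @ take i (drop (Suc j) ys)"
      by (metis take_add)
    then have "w = sum_list (map d (take (Suc j + i) ys))"
      unfolding i a_def by (simp add: add.assoc)
    moreover have "Suc j + i \<le> length ys" using i j by auto
    ultimately show "w \<in> prefix_degrees d ys - {0}"
      using nonzero[of "Suc j + i"] unfolding prefix_degrees_def
      by (intro DiffI image_eqI[of _ _ "Suc j + i"]) auto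
  qed
  have "card (prefix_degrees d (drop (Suc j) ys))
      = card ((\<lambda>z. a + z) ` prefix_degrees d (drop (Suc j) ys))"
    by (rule card_image[symmetric]) (auto intro: inj_onI)
  also have "\<dots> \<le> card (prefix_degrees d ys - {0})"
    using shift by (intro card_mono) (auto simp: prefix_degrees_finite)
  also have "\<dots> < card (prefix_degrees d ys)"
    using prefix_degrees_finite zero_in_prefix_degrees by (rule card_Diff1_less)
  finally show ?thesis .
qed

text \<open>The height budget of the induction step: a zero-degree prefix (height h), one letter
  and a suffix with c' < c prefix degrees fit into the bound for c prefix degrees.\<close>

lemma height_budget:
  fixes c c' h :: nat
  assumes "1 \<le> c'" "c' < c"
  shows "h + (1 + (c' * (h + 1) - 1)) \<le> c * (h + 1) - 1"
proof -
  have "h + (1 + (c' * (h + 1) - 1)) = (c' + 1) * (h + 1) - 1" using assms(1) by simp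
  also have "\<dots> \<le> c * (h + 1) - 1" using assms(2) by (intro diff_le_mono mult_le_mono1) simp
  finally show ?thesis .
qed

context
  fixes sc :: "'r::comm_ring_1 \<Rightarrow> 'a::ring \<Rightarrow> 'a" and Ag :: "'g::group_add \<Rightarrow> 'a set"
    and T :: "'a set" and h :: nat and d :: "'a \<Rightarrow> 'g"
  assumes alg: "algebra_over sc"
    and mult: "multiplicative Ag"
    and neutral: "Ag 0 \<subseteq> module.span sc (shirshov_words T h)"
begin

lemma height_le_degree_zero:
  assumes "\<forall>y\<in>set ys. y \<in> Ag (d y)" "sum_list (map d ys) = 0"
  shows "height_le sc T h ys"
  using lprod_homogeneous[OF mult, of ys d] assms neutral unfolding height_le_def by auto

lemma height_le_prefix_degrees:
  assumes "\<forall>y\<in>set ys. y \<in> Ag (d y) \<and> y \<in> T"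
  shows "height_le sc T (card (prefix_degrees d ys) * (h + 1) - 1) ys"
  using assms
proof (induction "length ys" arbitrary: ys rule: less_induct)
  case less
  define c where "c = card (prefix_degrees d ys)"
  have c_pos: "c \<ge> 1" using card_prefix_degrees_pos c_def by (simp add: Suc_le_eq)
  have homogeneous: "\<forall>y\<in>set ys. y \<in> Ag (d y)" using less.prems by auto
  obtain j where j: "j \<le> length ys" "sum_list (map d (take j ys)) = 0"
    and nonzero: "\<And>i. j < i \<Longrightarrow> i \<le> length ys \<Longrightarrow> sum_list (map d (take i ys)) \<noteq> 0"
    using last_zero_prefix[where d = d and ys = ys] by blast
  show ?case
  proof (cases "j = length ys")
    case True
    then have "height_le sc T h ys" using j homogeneous height_le_degree_zero by simp
    moreover have "h \<le> c * (h + 1) - 1" using c_pos by (cases c) auto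
    ultimately show ?thesis using height_le_mono[OF alg] c_def by blast
  next
    case False
    define q x r where "q = take j ys" and "x = ys ! j" and "r = drop (Suc j) ys"
    have "j < length ys" using False j(1) by simp
    then have split: "ys = q @ [x] @ r"
      unfolding q_def x_def r_def using id_take_nth_drop by simp
    define c' where "c' = card (prefix_degrees d r)"
    have "c' < c"
      unfolding c'_def c_def r_def using \<open>j < length ys\<close> nonzero
      by (rule card_prefix_degrees_suffix)
    have "c' \<ge> 1" using card_prefix_degrees_pos c'_def by (simp add: Suc_le_eq)
    have "set q \<subseteq> set ys" "set r \<subseteq> set ys" "x \<in> set ys" "length r < length ys"
      using \<open>j < length ys\<close> unfolding q_def r_def x_def
      by (auto dest: in_set_takeD in_set_dropD)
    then have "height_le sc T h q"
      using homogeneous j(2) by (intro height_le_degree_zero) (auto simp: q_def)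
    moreover have "height_le sc T 1 [x]"
      using less.prems \<open>x \<in> set ys\<close> by (intro height_le_letter[OF alg]) auto
    moreover have "height_le sc T (c' * (h + 1) - 1) r"
      unfolding c'_def using \<open>length r < length ys\<close> \<open>set r \<subseteq> set ys\<close> less.prems
      by (intro less.hyps) auto
    ultimately have "height_le sc T (h + (1 + (c' * (h + 1) - 1))) (q @ [x] @ r)"
      by (intro height_le_append[OF alg])
    then have "height_le sc T (h + (1 + (c' * (h + 1) - 1))) ys"
      using split by simp
    moreover have "h + (1 + (c' * (h + 1) - 1)) \<le> c * (h + 1) - 1"
      using \<open>c' \<ge> 1\<close> \<open>c' < c\<close> by (rule height_budget)
    ultimately show ?thesis using height_le_mono[OF alg] c_def by blast
  qed
qed

end

text \<open>For a finite group there are at most |G| prefix degrees, giving a uniform height.\<close>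

lemma monomial_height_bound:
  fixes sc :: "'r::comm_ring_1 \<Rightarrow> 'a::ring \<Rightarrow> 'a" and Ag :: "'g::{group_add,finite} \<Rightarrow> 'a set"
  assumes alg: "algebra_over sc"
    and mult: "multiplicative Ag"
    and neutral: "Ag 0 \<subseteq> module.span sc (shirshov_words T h)"
    and "\<forall>y\<in>Y. y \<in> Ag (d y)" "Y \<subseteq> T"
  shows "monomials Y \<subseteq> module.span sc (shirshov_words T ((h + 1) * card (UNIV :: 'g set) - 1))"
proof
  fix m assume "m \<in> monomials Y"
  then obtain ys where ys: "m = lprod ys" "ys \<noteq> []" "set ys \<subseteq> Y"
    unfolding monomials_def by blast
  have "\<forall>y\<in>set ys. y \<in> Ag (d y) \<and> y \<in> T" using ys assms(4,5) by auto
  then have "height_le sc T (card (prefix_degrees d ys) * (h + 1) - 1) ys"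
    by (rule height_le_prefix_degrees[OF alg mult neutral])
  moreover have "card (prefix_degrees d ys) \<le> card (UNIV :: 'g set)" by (rule card_mono) auto
  then have "card (prefix_degrees d ys) * (h + 1) \<le> card (UNIV :: 'g set) * (h + 1)"
    by (rule mult_le_mono1)
  then have "card (prefix_degrees d ys) * (h + 1) - 1 \<le> (h + 1) * card (UNIV :: 'g set) - 1"
    unfolding mult.commute[of "h + 1"] by (rule diff_le_mono)
  ultimately have "height_le sc T ((h + 1) * card (UNIV :: 'g set) - 1) ys"
    by (rule height_le_mono[OF alg])
  then show "m \<in> module.span sc (shirshov_words T ((h + 1) * card (UNIV :: 'g set) - 1))"
    using ys unfolding height_le_def by simp
qed

text \<open>A finitely generated graded algebra is generated by finitely many homogeneous
  elements: the homogeneous components of any finite generating set.\<close>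

lemma graded_homogeneous_generators:
  fixes sc :: "'r::comm_ring_1 \<Rightarrow> 'a::ring \<Rightarrow> 'a" and Ag :: "'g::{group_add,finite} \<Rightarrow> 'a set"
  assumes alg: "algebra_over sc" and "fin_gen_algebra sc" and "graded_by sc Ag"
  obtains Y d where "finite Y" "\<forall>y\<in>Y. y \<in> Ag (d y)" "module.span sc (monomials Y) = UNIV"
proof -
  interpret m: module sc using alg unfolding algebra_over_def by blast
  obtain X where X: "finite X" "m.span (monomials X) = UNIV"
    using assms(2) unfolding fin_gen_algebra_def monomials_def by blast
  define comp where "comp a = (THE c. (\<forall>g. c g \<in> Ag g) \<and> a = (\<Sum>g\<in>UNIV. c g))" for a
  have "\<exists>!c. (\<forall>g. c g \<in> Ag g) \<and> a = (\<Sum>g\<in>UNIV. c g)" for a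
    using assms(3) unfolding graded_by_def by blast
  then have comp: "(\<forall>g. comp a g \<in> Ag g) \<and> a = (\<Sum>g\<in>UNIV. comp a g)" for a
    unfolding comp_def by (rule theI')
  define Y where "Y = (\<Union>x\<in>X. range (comp x))"
  define d where "d y = (SOME g. y \<in> Ag g)" for y
  have "y \<in> Ag (d y)" if "y \<in> Y" for y
  proof -
    obtain x g where "y = comp x g" using \<open>y \<in> Y\<close> unfolding Y_def by blast
    then have "y \<in> Ag g" using comp by blast
    then show ?thesis unfolding d_def by (rule someI)
  qed
  then have "\<forall>y\<in>Y. y \<in> Ag (d y)" by blast
  moreover have "X \<subseteq> m.span Y"
  proof
    fix x assume "x \<in> X"
    then have "(\<Sum>g\<in>UNIV. comp x g) \<in> m.span Y"
      by (intro m.span_sum) (auto intro!: m.span_base simp: Y_def)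
    then show "x \<in> m.span Y" using comp[of x] by simp
  qed
  then have "monomials X \<subseteq> m.span (monomials Y)" by (rule monomials_in_span[OF alg])
  then have "m.span (monomials X) \<subseteq> m.span (monomials Y)" by (simp add: m.span_minimal)
  then have "m.span (monomials Y) = UNIV" using X(2) by blast
  moreover have "finite Y" unfolding Y_def using X(1) by simp
  ultimately show ?thesis using that by blast
qed

theorem theorem2:
  fixes sc :: "'r::comm_ring_1 \<Rightarrow> 'a::ring \<Rightarrow> 'a"
    and Ag :: "'g::{group_add,finite} \<Rightarrow> 'a set"
    and h :: nat
  assumes "algebra_over sc"
    and "fin_gen_algebra sc"
    and "graded_by sc Ag"
    and "\<exists>S. shirshov_base sc (Ag 0) S h"
  shows "\<exists>S k. k < (h + 1) * card (UNIV :: 'g set) \<and> shirshov_base sc UNIV S k"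
proof -
  interpret m: module sc using assms(1) unfolding algebra_over_def by blast
  obtain S where S: "finite S" "Ag 0 = m.span (shirshov_words S h)"
    using assms(4) unfolding shirshov_base_def by blast
  obtain Y d where Y: "finite Y" "\<forall>y\<in>Y. y \<in> Ag (d y)" "m.span (monomials Y) = UNIV"
    using graded_homogeneous_generators[OF assms(1-3)] by blast
  have mult: "multiplicative Ag"
    using assms(3) unfolding graded_by_def multiplicative_def by blast
  define K where "K = (h + 1) * card (UNIV :: 'g set) - 1"
  have "Ag 0 \<subseteq> m.span (shirshov_words (S \<union> Y) h)"
    unfolding S(2) by (intro m.span_mono shirshov_words_mono) auto
  then have "monomials Y \<subseteq> m.span (shirshov_words (S \<union> Y) K)"
    unfolding K_def using Y(2) by (rule monomial_height_bound[OF assms(1) mult]) blast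
  then have "m.span (monomials Y) \<subseteq> m.span (shirshov_words (S \<union> Y) K)"
    by (simp add: m.span_minimal)
  then have "UNIV = m.span (shirshov_words (S \<union> Y) K)"
    using Y(3) by blast
  moreover have "K < (h + 1) * card (UNIV :: 'g set)"
    unfolding K_def by (simp add: card_gt_0_iff)
  ultimately show ?thesis unfolding shirshov_base_def using S(1) Y(1) by blast
qed

end
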